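(* For any $n\in\mathbb{N}$ there exist two functions $g^n$ and $h^n$ with $\lim_{x\to\infty}g^n(x)=0$ and $\lim_{x\to\infty}h^n(x)=1$, independent of the choice of $z$, $\pi$ and $\rho$, such that for every $z=\{z_0,\dots,z_n\}$ with pairwise distinct coordinates, $\alpha=\min_{i\ne j}|z_i-z_j|$, and every $\rho>0$: (i) $\mathbb{E}_0[\mathcal{T}_0-t^+_0]\le g^n(\alpha\rho)$; (ii) for all $k>0$ and all $\pi\in\mathcal{P}^k_z$, $\mathbb{P}_\pi[T_{\pi,0}<T_\pi]\ge h^n(\alpha\rho)$.
   Context: $\mathcal{P}_z$ is the set of partitions of $z$; $\mathcal{P}^k_z$ those with $n+1-k$ blocks; $\pi_0$ is the partition into singletons. The ARG $\Gamma^{\rho,z}$ is the continuous-time Markov chain on $\mathcal{P}_z$ in which each pair of blocks merges at rate $1$ and each block $\{z_{i_1}<\dots<z_{i_k}\}$ splits into $\{z_{i_1},\dots,z_{i_j}\}$ and $\{z_{i_{j+1}},\dots,z_{i_k}\}$ at rate $\rho(z_{i_{j+1}}-z_{i_j})$. $\mathbb{P}_0,\mathbb{E}_0$ (resp. $\mathbb{P}_\pi$) refer to the chain started at $\pi_0$ (resp. $\pi$). $t_0^+=\inf\{t>0:\Gamma^{\rho,z}_t\ne\pi_0\}$, $\mathcal{T}_0=\inf\{t>t_0^+:\Gamma^{\rho,z}_t=\pi_0\}$; $t_\pi^+=\inf\{t>0:\Gamma^{\rho,z}_t\ne\pi\}$, $T_\pi=\inf\{t>t_\pi^+:\Gamma^{\rho,z}_t=\pi\}$,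 $T_{\pi,0}=\inf\{t>t_\pi^+:\Gamma^{\rho,z}_t=\pi_0\}$. *)

theory Defs
  imports Complex_Main "HOL-Library.Disjoint_Sets" "HOL-Library.Extended_Nonnegative_Real"
begin

text \<open>The continuous-time chain is described by its jump rates; expectations and probabilities
  of the quantities in the paper are expressed through the embedded jump chain
  (holding time in state P is exponential with mean 1 / total rate).\<close>

definition ARG_states :: "real set \<Rightarrow> real set set set" where
  "ARG_states Z = {P. partition_on Z P}"

definition pi0 :: "real set \<Rightarrow> real set set" where
  "pi0 Z = (\<lambda>x. {x}) ` Z"

text \<open>Sum of the rates (each equal to 1) of all pair-mergers leading from P to P'.\<close>
definition merge_rate :: "real set set \<Rightarrow> real set set \<Rightarrow> real" where
  "merge_rate P P' = real (card {S. S \<subseteq> P \<and> card S = 2 \<and> P' = (P - S) \<union> {\<Union>S}})"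

definition split_rate :: "real \<Rightarrow> real set set \<Rightarrow> real set set \<Rightarrow> real" where
  "split_rate \<rho> P P' =
     (\<Sum>(B, a, b) \<in> {(B, a, b). B \<in> P \<and> a \<in> B \<and> b \<in> B \<and> a < b \<and>
                         \<not> (\<exists>c\<in>B. a < c \<and> c < b) \<and>
                         P' = (P - {B}) \<union> {{x\<in>B. x \<le> a}, {x\<in>B. b \<le> x}}}.
        \<rho> * (b - a))"

definition ARG_rate :: "real \<Rightarrow> real set set \<Rightarrow> real set set \<Rightarrow> real" where
  "ARG_rate \<rho> P P' = (if P' = P then 0 else merge_rate P P' + split_rate \<rho> P P')"

definition total_rate :: "real set \<Rightarrow> real \<Rightarrow> real set set \<Rightarrow> real" where
  "total_rate Z \<rho> P = (\<Sum>P'\<in>ARG_states Z. ARG_rate \<rho> P P')"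

definition jump_prob :: "real set \<Rightarrow> real \<Rightarrow> real set set \<Rightarrow> real set set \<Rightarrow> real" where
  "jump_prob Z \<rho> P P' = ARG_rate \<rho> P P' / total_rate Z \<rho> P"

fun path_prob :: "real set \<Rightarrow> real \<Rightarrow> real set set \<Rightarrow> real set set list \<Rightarrow> real" where
  "path_prob Z \<rho> P [] = 1"
| "path_prob Z \<rho> P (x # xs) = jump_prob Z \<rho> P x * path_prob Z \<rho> x xs"

text \<open>E_0[T_0 - t_0^+]: sum over all excursions x_1 ... x_m of the jump chain from pi0 that
  return to pi0 for the first time at step m, of the probability of the excursion times the
  expected total holding time in x_1, ..., x_(m-1).\<close>
definition return_time_exp :: "real set \<Rightarrow> real \<Rightarrow> ennreal" where
  "return_time_exp Z \<rho> =
     (\<Sum>m. \<Sum>xs \<in> {xs. length xs = Suc m \<and> set xs \<subseteq> ARG_states Z \<and> last xs = pi0 Z \<and>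
                        pi0 Z \<notin> set (butlast xs)}.
        ennreal (path_prob Z \<rho> (pi0 Z) xs * (\<Sum>x\<leftarrow>butlast xs. 1 / total_rate Z \<rho> x)))"

text \<open>P_P[T_{P,0} < T_P]: probability that the chain started at P hits pi0 before
  returning to P.\<close>
definition escape_prob :: "real set \<Rightarrow> real \<Rightarrow> real set set \<Rightarrow> ennreal" where
  "escape_prob Z \<rho> P =
     (\<Sum>m. \<Sum>xs \<in> {xs. length xs = Suc m \<and> set xs \<subseteq> ARG_states Z \<and> last xs = pi0 Z \<and>
                        pi0 Z \<notin> set (butlast xs) \<and> P \<notin> set xs}.
        ennreal (path_prob Z \<rho> P xs))"

end

theory Submission
  imports Defs
begin

(* The number of blocks is a rank on the states of the ARG, and pi0 is the only state of full
  rank card Z. From every other state some split raises the rank by one at rate at least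
  x = alpha * rho, while all remaining jumps together have rate at most a constant M that depends
  on card Z only. So the jump chain climbs one rank with probability at least x / (x + M), and
  climbing straight from P to pi0 gives (ii). For (i), the potential
  W(c) = sum_{c <= i <= n} (1 + M / x)^i / x of a state with c blocks drops in expectation by at
  least the mean holding time 1 / (total rate) at every jump away from pi0 (a Foster-Lyapunov drift
  condition); summed along an excursion this bounds E_0[T_0 - t_0^+] by W(0), which tends to 0. *)

section \<open>Path sums of substochastic chains\<close>

fun path_weight :: "('s \<Rightarrow> 's \<Rightarrow> real) \<Rightarrow> 's \<Rightarrow> 's list \<Rightarrow> real" where
  "path_weight J x [] = 1"
| "path_weight J x (y # ys) = J x y * path_weight J y ys"

lemma path_weight_nonneg: "(\<And>x y. 0 \<le> J x y) \<Longrightarrow> 0 \<le> path_weight J x xs"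
  by (induction xs arbitrary: x) auto

lemma sum_Cons_image_Sigma:
  assumes "finite A" and "\<And>y. y \<in> A \<Longrightarrow> finite (B y)"
  shows "(\<Sum>xs\<in>(\<lambda>(y, ys). y # ys) ` Sigma A B. f xs) = (\<Sum>y\<in>A. \<Sum>ys\<in>B y. f (y # ys))"
proof -
  have "inj_on (\<lambda>(y, ys). y # ys) (Sigma A B)"
    by (auto simp: inj_on_def)
  then show ?thesis
    using assms by (simp add: sum.reindex sum.Sigma case_prod_beta')
qed

definition first_passage_paths :: "'s set \<Rightarrow> 's \<Rightarrow> nat \<Rightarrow> 's list set" where
  "first_passage_paths S t m =
     {xs. length xs = Suc m \<and> set xs \<subseteq> S \<and> last xs = t \<and> t \<notin> set (butlast xs)}"

lemma finite_first_passage_paths: "finite S \<Longrightarrow> finite (first_passage_paths S t m)"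
  unfolding first_passage_paths_def
  by (rule finite_subset[OF _ finite_lists_length_eq[of S "Suc m"]]) auto

lemma first_passage_paths_0: "t \<in> S \<Longrightarrow> first_passage_paths S t 0 = {[t]}"
  unfolding first_passage_paths_def by (auto simp: length_Suc_conv)

lemma first_passage_paths_Suc:
  "first_passage_paths S t (Suc m) = (\<lambda>(y, ys). y # ys) ` ((S - {t}) \<times> first_passage_paths S t m)"
  unfolding first_passage_paths_def
  by (fastforce simp: length_Suc_conv image_iff split: if_splits)

fun ascending :: "('s \<Rightarrow> nat) \<Rightarrow> 's \<Rightarrow> 's list \<Rightarrow> bool" where
  "ascending r x [] = True"
| "ascending r x (y # ys) \<longleftrightarrow> r y = Suc (r x) \<and> ascending r y ys"

lemma ascending_nth: "ascending r x xs \<Longrightarrow> i < length xs \<Longrightarrow> r (xs ! i) = r x + Suc i"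
  by (induction xs arbitrary: x i) (auto simp: nth_Cons split: nat.splits)

definition ascending_paths :: "'s set \<Rightarrow> ('s \<Rightarrow> nat) \<Rightarrow> nat \<Rightarrow> 's \<Rightarrow> 's list set" where
  "ascending_paths S r k x = {xs. length xs = k \<and> set xs \<subseteq> S \<and> ascending r x xs}"

lemma finite_ascending_paths: "finite S \<Longrightarrow> finite (ascending_paths S r k x)"
  unfolding ascending_paths_def
  by (rule finite_subset[OF _ finite_lists_length_eq[of S k]]) auto

lemma ascending_paths_Suc:
  "ascending_paths S r (Suc k) x =
     (\<lambda>(y, ys). y # ys) ` (SIGMA y:{y\<in>S. r y = Suc (r x)}. ascending_paths S r k y)"
  unfolding ascending_paths_def by (fastforce simp: length_Suc_conv)

lemma ascending_path_first_passage:
  assumes xs: "xs \<in> ascending_paths S r k x" and "0 < k" and "r x + k = N"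
    and t: "r t = N" and top: "\<And>y. y \<in> S \<Longrightarrow> r y = N \<Longrightarrow> y = t"
  shows "xs \<in> first_passage_paths S t (k - 1)" and "x \<notin> set xs"
proof -
  have len: "length xs = k" and sub: "set xs \<subseteq> S" and asc: "ascending r x xs"
    using xs by (auto simp: ascending_paths_def)
  have rank: "r (xs ! i) = r x + Suc i" if "i < k" for i
    using ascending_nth[OF asc] that len by simp
  have "xs \<noteq> []"
    using len \<open>0 < k\<close> by auto
  then have "last xs \<in> S"
    using sub by auto
  moreover have "r (last xs) = N"
    using rank[of "k - 1"] len \<open>xs \<noteq> []\<close> \<open>0 < k\<close> \<open>r x + k = N\<close> by (simp add: last_conv_nth)
  ultimately have "last xs = t"
    by (rule top)
  moreover have "t \<notin> set (butlast xs)"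
    using rank t \<open>r x + k = N\<close> len by (auto simp: in_set_conv_nth nth_butlast)
  ultimately show "xs \<in> first_passage_paths S t (k - 1)"
    using len sub \<open>0 < k\<close> by (auto simp: first_passage_paths_def)
  show "x \<notin> set xs"
    using rank len by (fastforce simp: in_set_conv_nth)
qed

locale substochastic =
  fixes S :: "'s set" and J :: "'s \<Rightarrow> 's \<Rightarrow> real"
  assumes finite_states: "finite S"
    and J_nonneg: "\<And>x y. 0 \<le> J x y"
    and row_sum_le_1: "\<And>x. x \<in> S \<Longrightarrow> (\<Sum>y\<in>S. J x y) \<le> 1"
begin

definition hitting_prob :: "'s \<Rightarrow> nat \<Rightarrow> 's \<Rightarrow> real" where
  "hitting_prob t m x = (\<Sum>xs\<in>first_passage_paths S t m. path_weight J x xs)"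

definition hitting_cost :: "('s \<Rightarrow> real) \<Rightarrow> 's \<Rightarrow> nat \<Rightarrow> 's \<Rightarrow> real" where
  "hitting_cost c t m x =
     (\<Sum>xs\<in>first_passage_paths S t m. path_weight J x xs * (\<Sum>y\<leftarrow>butlast xs. c y))"

lemma sum_first_passage_paths_Suc:
  "(\<Sum>xs\<in>first_passage_paths S t (Suc m). f xs) =
     (\<Sum>y\<in>S - {t}. \<Sum>ys\<in>first_passage_paths S t m. f (y # ys))"
  unfolding first_passage_paths_Suc
  using finite_states by (simp add: sum_Cons_image_Sigma finite_first_passage_paths)

lemma hitting_prob_0: "t \<in> S \<Longrightarrow> hitting_prob t 0 x = J x t"
  by (simp add: hitting_prob_def first_passage_paths_0)

lemma hitting_prob_Suc: "hitting_prob t (Suc m) x = (\<Sum>y\<in>S - {t}. J x y * hitting_prob t m y)"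
  by (simp add: hitting_prob_def sum_first_passage_paths_Suc sum_distrib_left)

lemma sum_hitting_prob_le_1:
  assumes "t \<in> S" and "x \<in> S"
  shows "(\<Sum>m<K. hitting_prob t m x) \<le> 1"
  using \<open>x \<in> S\<close>
proof (induction K arbitrary: x)
  case (Suc K)
  have "(\<Sum>m<Suc K. hitting_prob t m x) = J x t + (\<Sum>y\<in>S - {t}. J x y * (\<Sum>m<K. hitting_prob t m y))"
    by (simp add: sum.lessThan_Suc_shift hitting_prob_0 hitting_prob_Suc \<open>t \<in> S\<close>
        sum_distrib_left sum.swap[of _ "{..<K}"] del: sum.lessThan_Suc)
  also have "\<dots> \<le> J x t + (\<Sum>y\<in>S - {t}. J x y)"
    using Suc.IH by (intro add_left_mono sum_mono mult_left_le J_nonneg) auto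
  also have "\<dots> = (\<Sum>y\<in>S. J x y)"
    using finite_states \<open>t \<in> S\<close> by (simp add: sum.remove)
  finally show ?case
    using row_sum_le_1[OF Suc.prems] by simp
qed simp

lemma hitting_cost_0: "t \<in> S \<Longrightarrow> hitting_cost c t 0 x = 0"
  by (simp add: hitting_cost_def first_passage_paths_0)

lemma hitting_cost_Suc:
  "hitting_cost c t (Suc m) x =
     (\<Sum>y\<in>S - {t}. J x y * (c y * hitting_prob t m y + hitting_cost c t m y))"
proof -
  have "ys \<noteq> []" if "ys \<in> first_passage_paths S t m" for ys
    using that by (auto simp: first_passage_paths_def)
  then show ?thesis
    by (simp add: hitting_cost_def hitting_prob_def sum_first_passage_paths_Suc
        sum_distrib_left sum.distrib algebra_simps cong: sum.cong)
qed

lemma hitting_cost_nonneg: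
  assumes "\<And>y. y \<in> S - {t} \<Longrightarrow> 0 \<le> c y"
  shows "0 \<le> hitting_cost c t m x"
proof -
  have "0 \<le> c y" if "xs \<in> first_passage_paths S t m" and "y \<in> set (butlast xs)" for xs y
  proof -
    have "y \<in> S - {t}"
      using that in_set_butlastD[OF that(2)] by (auto simp: first_passage_paths_def)
    then show ?thesis
      by (rule assms)
  qed
  then show ?thesis
    unfolding hitting_cost_def
    by (intro sum_nonneg mult_nonneg_nonneg path_weight_nonneg J_nonneg sum_list_nonneg) auto
qed

lemma sum_hitting_cost_le:
  assumes "t \<in> S"
    and c_nonneg: "\<And>y. y \<in> S - {t} \<Longrightarrow> 0 \<le> c y"
    and V_nonneg: "\<And>y. y \<in> S - {t} \<Longrightarrow> 0 \<le> V y"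
    and drift: "\<And>y. y \<in> S - {t} \<Longrightarrow> c y + (\<Sum>y'\<in>S - {t}. J y y' * V y') \<le> V y"
  shows "(\<Sum>m<K. hitting_cost c t m x) \<le> (\<Sum>y\<in>S - {t}. J x y * V y)"
proof (induction K arbitrary: x)
  case 0
  show ?case
    using V_nonneg by (auto intro!: sum_nonneg mult_nonneg_nonneg J_nonneg)
next
  case (Suc K)
  have "(\<Sum>m<Suc K. hitting_cost c t m x) =
      (\<Sum>y\<in>S - {t}. J x y * (\<Sum>m<K. c y * hitting_prob t m y + hitting_cost c t m y))"
    by (simp add: sum.lessThan_Suc_shift hitting_cost_0 hitting_cost_Suc \<open>t \<in> S\<close>
        sum_distrib_left sum.swap[of _ "{..<K}"] del: sum.lessThan_Suc)
  also have "\<dots> \<le> (\<Sum>y\<in>S - {t}. J x y * (c y + (\<Sum>y'\<in>S - {t}. J y y' * V y')))"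
    unfolding sum.distrib sum_distrib_left[symmetric]
    using sum_hitting_prob_le_1[OF \<open>t \<in> S\<close>] c_nonneg Suc.IH
    by (intro sum_mono mult_left_mono add_mono mult_left_le J_nonneg) auto
  also have "\<dots> \<le> (\<Sum>y\<in>S - {t}. J x y * V y)"
    using drift by (intro sum_mono mult_left_mono J_nonneg) auto
  finally show ?case .
qed

lemma suminf_hitting_cost_le:
  assumes "t \<in> S"
    and c_nonneg: "\<And>y. y \<in> S - {t} \<Longrightarrow> 0 \<le> c y"
    and V_nonneg: "\<And>y. y \<in> S - {t} \<Longrightarrow> 0 \<le> V y"
    and drift: "\<And>y. y \<in> S - {t} \<Longrightarrow> c y + (\<Sum>y'\<in>S - {t}. J y y' * V y') \<le> V y"
  shows "(\<Sum>m. ennreal (hitting_cost c t m x)) \<le> ennreal (\<Sum>y\<in>S - {t}. J x y * V y)"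
proof (rule suminf_le_const[OF summableI])
  fix K
  have "0 \<le> hitting_cost c t m x" for m
    using c_nonneg by (rule hitting_cost_nonneg)
  then show "(\<Sum>m<K. ennreal (hitting_cost c t m x)) \<le> ennreal (\<Sum>y\<in>S - {t}. J x y * V y)"
    using sum_hitting_cost_le[OF assms] by (simp add: sum_ennreal ennreal_leI)
qed

lemma ascending_paths_weight_ge:
  assumes "0 \<le> p"
    and step: "\<And>y. y \<in> S \<Longrightarrow> r y < N \<Longrightarrow> p \<le> (\<Sum>y'\<in>{y'\<in>S. r y' = Suc (r y)}. J y y')"
    and "x \<in> S" and "r x + k \<le> N"
  shows "p ^ k \<le> (\<Sum>xs\<in>ascending_paths S r k x. path_weight J x xs)"
  using \<open>x \<in> S\<close> \<open>r x + k \<le> N\<close>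
proof (induction k arbitrary: x)
  case 0
  have "ascending_paths S r 0 x = {[]}"
    by (auto simp: ascending_paths_def)
  then show ?case
    by simp
next
  case (Suc k)
  let ?succ = "{y\<in>S. r y = Suc (r x)}"
  have "p ^ Suc k \<le> (\<Sum>y\<in>?succ. J x y) * p ^ k"
    using step[OF Suc.prems(1)] Suc.prems(2) \<open>0 \<le> p\<close> by (simp add: mult_right_mono)
  also have "\<dots> \<le> (\<Sum>y\<in>?succ. J x y * (\<Sum>ys\<in>ascending_paths S r k y. path_weight J y ys))"
    unfolding sum_distrib_right using Suc.IH Suc.prems(2)
    by (intro sum_mono mult_left_mono J_nonneg) auto
  also have "\<dots> = (\<Sum>xs\<in>ascending_paths S r (Suc k) x. path_weight J x xs)"
    unfolding ascending_paths_Suc using finite_states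
    by (simp add: sum_Cons_image_Sigma finite_ascending_paths sum_distrib_left)
  finally show ?case .
qed

end

section \<open>Partitions\<close>

lemma card_partition_on_le:
  assumes "finite A" and "partition_on A P"
  shows "card P \<le> card A"
proof -
  have fin: "finite B" if "B \<in> P" for B
    using assms that by (auto simp: partition_on_def intro: finite_subset)
  have "card B \<ge> 1" if "B \<in> P" for B
    using assms(2) fin that by (auto simp: partition_on_def Suc_le_eq card_gt_0_iff)
  then have "card P \<le> (\<Sum>B\<in>P. card B)"
    using sum_mono[of P "\<lambda>_. 1" card] by simp
  also have "\<dots> = card A"
    using assms(2) fin by (simp add: product_partition)
  finally show ?thesis .
qed

lemma card_partition_on_less:
  assumes "finite A" and "partition_on A P" and "B \<in> P" and "a \<in> B" "b \<in> B" "a \<noteq> b"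
  shows "card P < card A"
proof -
  have fin: "finite B" if "B \<in> P" for B
    using assms that by (auto simp: partition_on_def intro: finite_subset)
  have "card B \<ge> 1" if "B \<in> P" for B
    using assms(2) fin that by (auto simp: partition_on_def Suc_le_eq card_gt_0_iff)
  moreover have "card {a, b} \<le> card B"
    using assms fin by (intro card_mono) auto
  ultimately have "card P < (\<Sum>B\<in>P. card B)"
    using sum_strict_mono_ex1[of P "\<lambda>_. 1" card] assms finite_elements by fastforce
  also have "\<dots> = card A"
    using assms(2) fin by (simp add: product_partition)
  finally show ?thesis .
qed

lemma partition_on_nonsingleton_block:
  assumes P: "partition_on A P" and "P \<noteq> (\<lambda>x. {x}) ` A"
  obtains B a b where "B \<in> P" "a \<in> B" "b \<in> B" "a \<noteq> b"
proof (rule ccontr)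
  assume "\<not> thesis"
  with that have sing: "B = {a}" if "B \<in> P" "a \<in> B" for B a
    using that by blast
  have "P \<subseteq> (\<lambda>x. {x}) ` A"
  proof
    fix B assume "B \<in> P"
    moreover have "B \<noteq> {}"
      using P \<open>B \<in> P\<close> by (auto simp: partition_on_def)
    then obtain a where "a \<in> B"
      by blast
    ultimately show "B \<in> (\<lambda>x. {x}) ` A"
      using P sing by (auto simp: partition_on_def)
  qed
  moreover have "(\<lambda>x. {x}) ` A \<subseteq> P"
  proof
    fix C assume "C \<in> (\<lambda>x. {x}) ` A"
    then obtain x B where "C = {x}" "B \<in> P" "x \<in> B"
      using P by (auto simp: partition_on_def)
    then show "C \<in> P"
      using sing by simp
  qed
  ultimately show False
    using assms(2) by blast
qed

lemma partition_on_split_block: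
  assumes "finite A" and P: "partition_on A P" and "B \<in> P"
    and B: "B\<^sub>1 \<union> B\<^sub>2 = B" "B\<^sub>1 \<inter> B\<^sub>2 = {}" "B\<^sub>1 \<noteq> {}" "B\<^sub>2 \<noteq> {}"
  shows "partition_on A (P - {B} \<union> {B\<^sub>1, B\<^sub>2})" and "card (P - {B} \<union> {B\<^sub>1, B\<^sub>2}) = Suc (card P)"
proof -
  have disj: "C \<inter> B = {}" if "C \<in> P - {B}" for C
    using P \<open>B \<in> P\<close> that by (auto simp: partition_on_def disjoint_def)
  show "partition_on A (P - {B} \<union> {B\<^sub>1, B\<^sub>2})"
  proof (rule partition_onI)
    show "\<Union>(P - {B} \<union> {B\<^sub>1, B\<^sub>2}) = A"
      using P \<open>B \<in> P\<close> B(1) by (auto simp: partition_on_def)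
    show "{} \<notin> P - {B} \<union> {B\<^sub>1, B\<^sub>2}"
      using P B(3,4) by (auto simp: partition_on_def)
    fix C D assume "C \<in> P - {B} \<union> {B\<^sub>1, B\<^sub>2}" "D \<in> P - {B} \<union> {B\<^sub>1, B\<^sub>2}" "C \<noteq> D"
    then show "disjnt C D"
      using P disj B(1,2) unfolding disjnt_def partition_on_def disjoint_def by blast
  qed
  have "B\<^sub>1 \<notin> P - {B}" "B\<^sub>2 \<notin> P - {B}" "B\<^sub>1 \<noteq> B\<^sub>2"
    using disj B by blast+
  moreover have "finite P"
    using assms(1,2) by (rule finite_elements)
  moreover have "Suc (card (P - {B})) = card P"
    using \<open>finite P\<close> \<open>B \<in> P\<close> by (rule card_Suc_Diff1)
  ultimately show "card (P - {B} \<union> {B\<^sub>1, B\<^sub>2}) = Suc (card P)"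
    by simp
qed

definition cut_block :: "real set set \<Rightarrow> real set \<Rightarrow> real \<Rightarrow> real \<Rightarrow> real set set" where
  "cut_block P B a b = P - {B} \<union> {{x\<in>B. x \<le> a}, {x\<in>B. b \<le> x}}"

lemma partition_on_cut_block:
  assumes "finite A" and "partition_on A P" and "B \<in> P"
    and "a \<in> B" "b \<in> B" "a < b" and "\<not> (\<exists>c\<in>B. a < c \<and> c < b)"
  shows "partition_on A (cut_block P B a b)" and "card (cut_block P B a b) = Suc (card P)"
proof -
  have "{x\<in>B. x \<le> a} \<union> {x\<in>B. b \<le> x} = B"
    using assms(7) by force
  moreover have "{x\<in>B. x \<le> a} \<inter> {x\<in>B. b \<le> x} = {}"
    using \<open>a < b\<close> by auto
  ultimately show "partition_on A (cut_block P B a b)" "card (cut_block P B a b) = Suc (card P)"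
    unfolding cut_block_def using partition_on_split_block[OF assms(1-3)] assms(4-6) by blast+
qed

lemma consecutive_in_finite:
  fixes B :: "real set"
  assumes "finite B" and "a \<in> B" "b \<in> B" "a < b"
  obtains b' where "b' \<in> B" "a < b'" "\<not> (\<exists>c\<in>B. a < c \<and> c < b')"
proof
  let ?U = "{x\<in>B. a < x}"
  have "?U \<noteq> {}" "finite ?U"
    using assms by auto
  then show "Min ?U \<in> B" "a < Min ?U" "\<not> (\<exists>c\<in>B. a < c \<and> c < Min ?U)"
    using Min_in[of ?U] Min_le[of ?U] by fastforce+
qed

section \<open>A geometric potential\<close>

definition geometric_potential :: "real \<Rightarrow> real \<Rightarrow> nat \<Rightarrow> nat \<Rightarrow> real" where
  "geometric_potential M x N c = (\<Sum>i\<in>{c..<N}. (1 + M / x) ^ i / x)"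

lemma geometric_potential_nonneg:
  "0 \<le> M \<Longrightarrow> 0 < x \<Longrightarrow> 0 \<le> geometric_potential M x N c"
  unfolding geometric_potential_def by (intro sum_nonneg) auto

lemma geometric_potential_antimono:
  "0 \<le> M \<Longrightarrow> 0 < x \<Longrightarrow> c \<le> c' \<Longrightarrow> geometric_potential M x N c' \<le> geometric_potential M x N c"
  unfolding geometric_potential_def by (intro sum_mono2) auto

lemma geometric_potential_drift:
  fixes M x s e :: real
  assumes "0 \<le> M" "0 < x" "c < N" "x \<le> s" "0 \<le> e" "e \<le> M"
  defines "W \<equiv> geometric_potential M x N"
  shows "1 + s * W (Suc c) + e * W 0 \<le> (s + e) * W c"
proof -
  define q where "q = 1 + M / x"
  define D where "D = (\<Sum>i<c. q ^ i / x)"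
  have W_Suc: "W c = q ^ c / x + W (Suc c)"
    using \<open>c < N\<close> by (simp add: W_def geometric_potential_def q_def sum.atLeast_Suc_lessThan)
  have W_0: "W 0 = D + W c"
    using \<open>c < N\<close> sum.atLeastLessThan_concat[of 0 c N "\<lambda>i. q ^ i / x"]
    by (simp add: W_def geometric_potential_def D_def q_def atLeast0LessThan)
  have "0 \<le> D"
    using assms by (auto simp: D_def q_def intro!: sum_nonneg)
  with \<open>e \<le> M\<close> have "e * D \<le> M * D"
    by (rule mult_right_mono)
  also have "M * D = (q - 1) * (\<Sum>i<c. q ^ i)"
    using \<open>0 < x\<close> by (simp add: D_def q_def sum_divide_distrib[symmetric])
  also have "\<dots> = q ^ c - 1"
    by (rule power_diff_1_eq[symmetric])
  finally have "e * D \<le> q ^ c - 1" .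
  moreover have "q ^ c \<le> s * (q ^ c / x)"
    using \<open>x \<le> s\<close> \<open>0 < x\<close> \<open>0 \<le> M\<close> by (simp add: q_def field_simps mult_right_mono)
  moreover have "(s + e) * W c - (s * W (Suc c) + e * W 0) = s * (q ^ c / x) - e * D"
    unfolding W_0 W_Suc by (simp add: algebra_simps add_divide_distrib)
  ultimately show ?thesis
    by linarith
qed

lemma geometric_potential_tendsto_0:
  "((\<lambda>x. geometric_potential M x N c) \<longlongrightarrow> 0) at_top"
  unfolding geometric_potential_def
proof (rule tendsto_null_sum)
  fix i
  have "((\<lambda>x. (1 + M / x) ^ i) \<longlongrightarrow> (1 + 0) ^ i) at_top"
    by (intro tendsto_intros tendsto_divide_0[OF tendsto_const] filterlim_at_top_imp_at_infinity
        filterlim_ident)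
  then show "((\<lambda>x. (1 + M / x) ^ i / x) \<longlongrightarrow> 0) at_top"
    by (rule tendsto_divide_0[OF _ filterlim_at_top_imp_at_infinity[OF filterlim_ident]])
qed

lemma tendsto_ratio_power_1:
  fixes M :: real
  shows "((\<lambda>x. (x / (x + M)) ^ n) \<longlongrightarrow> 1) at_top"
proof -
  have "((\<lambda>x. 1 / (1 + M / x)) \<longlongrightarrow> 1 / (1 + 0)) at_top"
    by (intro tendsto_intros tendsto_divide_0[OF tendsto_const] filterlim_at_top_imp_at_infinity
        filterlim_ident) simp
  moreover have "\<forall>\<^sub>F x in at_top. 1 / (1 + M / x) = x / (x + M)"
    using eventually_gt_at_top[of 0] by eventually_elim (simp add: field_simps)
  ultimately have "((\<lambda>x. x / (x + M)) \<longlongrightarrow> 1) at_top"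
    by (simp add: tendsto_cong)
  then show ?thesis
    using tendsto_power[of _ 1] by fastforce
qed

section \<open>The jump chain of the ARG\<close>

lemma pi0_in_ARG_states: "pi0 Z \<in> ARG_states Z"
  by (simp add: ARG_states_def pi0_def partition_on_singletons)

lemma card_pi0: "card (pi0 Z) = card Z"
  unfolding pi0_def by (rule card_image) (simp add: inj_on_def)

lemma finite_ARG_states: "finite Z \<Longrightarrow> finite (ARG_states Z)"
  unfolding ARG_states_def by (rule finitely_many_partition_on)

lemma card_ARG_states_le:
  assumes "finite Z"
  shows "card (ARG_states Z) \<le> 2 ^ 2 ^ card Z"
proof -
  have "card (ARG_states Z) \<le> card (Pow (Pow Z))"
    using assms by (intro card_mono) (auto simp: ARG_states_def partition_on_def)
  then show ?thesis
    using assms by (simp add: card_Pow)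
qed

lemma card_ARG_state_le: "finite Z \<Longrightarrow> P \<in> ARG_states Z \<Longrightarrow> card P \<le> card Z"
  unfolding ARG_states_def by (simp add: card_partition_on_le)

lemma ARG_state_splittable:
  assumes "finite Z" and "P \<in> ARG_states Z" and "P \<noteq> pi0 Z"
  obtains B a b where "B \<in> P" "a \<in> B" "b \<in> B" "a < b" "\<not> (\<exists>c\<in>B. a < c \<and> c < b)"
proof -
  have P: "partition_on Z P"
    using assms(2) by (simp add: ARG_states_def)
  obtain B a b where B: "B \<in> P" "a \<in> B" "b \<in> B" "a \<noteq> b"
    using partition_on_nonsingleton_block[OF P] assms(3) unfolding pi0_def by blast
  have "finite B"
    using assms(1) P B(1) by (auto simp: partition_on_def intro: finite_subset)
  moreover have "min a b \<in> B" "max a b \<in> B" "min a b < max a b"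
    using B by (auto simp: min_def max_def)
  ultimately show ?thesis
    using B(1) that consecutive_in_finite by metis
qed

lemma card_ARG_state_less:
  assumes "finite Z" and "P \<in> ARG_states Z" and "P \<noteq> pi0 Z"
  shows "card P < card Z"
proof -
  obtain B a b where "B \<in> P" "a \<in> B" "b \<in> B" "a < b"
    using ARG_state_splittable[OF assms] .
  then show ?thesis
    using assms(1,2) card_partition_on_less[of Z P B a b] by (simp add: ARG_states_def)
qed

lemma ARG_rate_nonneg:
  assumes "0 \<le> \<rho>"
  shows "0 \<le> ARG_rate \<rho> P P'"
proof -
  have "0 \<le> split_rate \<rho> P P'"
    unfolding split_rate_def using assms by (intro sum_nonneg) auto
  then show ?thesis
    by (simp add: ARG_rate_def merge_rate_def)
qed

lemma merge_rate_le: "finite P \<Longrightarrow> merge_rate P P' \<le> 2 ^ card P"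
proof -
  assume "finite P"
  then have "card {S. S \<subseteq> P \<and> card S = 2 \<and> P' = P - S \<union> {\<Union>S}} \<le> card (Pow P)"
    by (intro card_mono) auto
  then show ?thesis
    using \<open>finite P\<close> by (simp add: merge_rate_def card_Pow flip: of_nat_le_iff)
qed

lemma split_rate_cut_block:
  "split_rate \<rho> P P' =
     (\<Sum>(B, a, b)\<in>{(B, a, b). B \<in> P \<and> a \<in> B \<and> b \<in> B \<and> a < b \<and>
                         \<not> (\<exists>c\<in>B. a < c \<and> c < b) \<and> P' = cut_block P B a b}.
        \<rho> * (b - a))"
  by (simp only: split_rate_def cut_block_def)

lemma split_rate_eq_0:
  assumes "finite Z" and "P \<in> ARG_states Z" and "card P' \<noteq> Suc (card P)"
  shows "split_rate \<rho> P P' = 0"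
proof -
  have "card P' = Suc (card P)"
    if "B \<in> P" "a \<in> B" "b \<in> B" "a < b" "\<not> (\<exists>c\<in>B. a < c \<and> c < b)" "P' = cut_block P B a b" for B a b
    using partition_on_cut_block[of Z P B a b] assms(1,2) that by (simp add: ARG_states_def)
  then show ?thesis
    using assms(3) unfolding split_rate_cut_block by (auto intro!: sum.neutral)
qed

lemma split_rate_cut_block_ge:
  assumes "finite Z" and "P \<in> ARG_states Z" and "0 \<le> \<rho>"
    and "B \<in> P" "a \<in> B" "b \<in> B" "a < b" "\<not> (\<exists>c\<in>B. a < c \<and> c < b)"
  shows "\<rho> * (b - a) \<le> split_rate \<rho> P (cut_block P B a b)"
proof -
  let ?I = "{(B', a', b'). B' \<in> P \<and> a' \<in> B' \<and> b' \<in> B' \<and> a' < b' \<and>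
              \<not> (\<exists>c\<in>B'. a' < c \<and> c < b') \<and> cut_block P B a b = cut_block P B' a' b'}"
  have P: "partition_on Z P"
    using assms(2) by (simp add: ARG_states_def)
  have "finite (SIGMA B':P. B' \<times> B')"
    using assms(1) P by (intro finite_SigmaI finite_elements finite_cartesian_product)
      (auto simp: partition_on_def intro: finite_subset)
  moreover have "?I \<subseteq> (SIGMA B':P. B' \<times> B')"
    by auto
  ultimately have "finite ?I"
    by (rule finite_subset[rotated])
  moreover have "(B, a, b) \<in> ?I"
    using assms(4-8) by simp
  moreover have "0 \<le> \<rho> * (b' - a')" if "(B', a', b') \<in> ?I" for B' a' b'
    using that \<open>0 \<le> \<rho>\<close> by simp
  ultimately have "\<rho> * (b - a) \<le> (\<Sum>(B', a', b')\<in>?I. \<rho> * (b' - a'))"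
    using member_le_sum[of "(B, a, b)" ?I "\<lambda>(B', a', b'). \<rho> * (b' - a')"] by fastforce
  then show ?thesis
    unfolding split_rate_cut_block .
qed

(* At most 2 ^ 2 ^ card Z target states, each reached by at most 2 ^ card Z mergers. *)
definition other_rates_bound :: "nat \<Rightarrow> real" where
  "other_rates_bound N = 2 ^ N * 2 ^ 2 ^ N"

lemma other_rates_bound_pos: "0 < other_rates_bound N"
  by (simp add: other_rates_bound_def)

lemma path_prob_eq_path_weight: "path_prob Z \<rho> P xs = path_weight (jump_prob Z \<rho>) P xs"
  by (induction xs arbitrary: P) auto

(* The gap condition is vacuous for card Z <= 1, where the theorem's alpha is Min {}. *)
locale ARG_min_gap =
  fixes Z :: "real set" and \<alpha> \<rho> :: real
  assumes finite_Z: "finite Z" and rho_pos: "0 < \<rho>"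
    and min_gap: "\<And>a b. a \<in> Z \<Longrightarrow> b \<in> Z \<Longrightarrow> a < b \<Longrightarrow> 0 < \<alpha> \<and> \<alpha> \<le> b - a"
begin

definition up_rate :: "real set set \<Rightarrow> real" where
  "up_rate P = (\<Sum>P'\<in>{P'\<in>ARG_states Z. card P' = Suc (card P)}. ARG_rate \<rho> P P')"

definition other_rate :: "real set set \<Rightarrow> real" where
  "other_rate P = (\<Sum>P'\<in>{P'\<in>ARG_states Z. card P' \<noteq> Suc (card P)}. ARG_rate \<rho> P P')"

abbreviation climb_prob :: real where
  "climb_prob \<equiv> \<alpha> * \<rho> / (\<alpha> * \<rho> + other_rates_bound (card Z))"

abbreviation potential :: "nat \<Rightarrow> real" where
  "potential \<equiv> geometric_potential (other_rates_bound (card Z)) (\<alpha> * \<rho>) (card Z)"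

lemma rate_nonneg: "0 \<le> ARG_rate \<rho> P P'"
  using rho_pos by (simp add: ARG_rate_nonneg)

lemma up_rate_nonneg: "0 \<le> up_rate P"
  unfolding up_rate_def by (intro sum_nonneg rate_nonneg)

lemma other_rate_nonneg: "0 \<le> other_rate P"
  unfolding other_rate_def by (intro sum_nonneg rate_nonneg)

lemma total_rate_eq: "total_rate Z \<rho> P = up_rate P + other_rate P"
  using sum.Int_Diff[OF finite_ARG_states[OF finite_Z], of "ARG_rate \<rho> P" "{P'. card P' = Suc (card P)}"]
  by (simp add: total_rate_def up_rate_def other_rate_def Int_def set_diff_eq)

lemma up_rate_ge:
  assumes P: "P \<in> ARG_states Z" and "P \<noteq> pi0 Z"
  shows "0 < \<alpha>" and "\<alpha> * \<rho> \<le> up_rate P"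
proof -
  obtain B a b where B: "B \<in> P" "a \<in> B" "b \<in> B" "a < b" "\<not> (\<exists>c\<in>B. a < c \<and> c < b)"
    using ARG_state_splittable[OF finite_Z assms] .
  have "a \<in> Z" "b \<in> Z"
    using P B by (auto simp: ARG_states_def partition_on_def)
  then have gap: "0 < \<alpha>" "\<alpha> \<le> b - a"
    using min_gap \<open>a < b\<close> by auto
  then show "0 < \<alpha>"
    by simp
  let ?P' = "cut_block P B a b"
  have P': "?P' \<in> ARG_states Z" "card ?P' = Suc (card P)"
    using partition_on_cut_block[OF finite_Z _ B] P by (auto simp: ARG_states_def)
  have "\<alpha> * \<rho> \<le> \<rho> * (b - a)"
    using gap rho_pos by (simp add: mult.commute)
  also have "\<dots> \<le> split_rate \<rho> P ?P'"
    using split_rate_cut_block_ge[OF finite_Z P _ B] rho_pos by simp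
  also have "\<dots> \<le> ARG_rate \<rho> P ?P'"
    using P'(2) by (auto simp: ARG_rate_def merge_rate_def)
  also have "\<dots> \<le> up_rate P"
    unfolding up_rate_def using P' finite_ARG_states[OF finite_Z] rate_nonneg
    by (intro member_le_sum) auto
  finally show "\<alpha> * \<rho> \<le> up_rate P" .
qed

lemma other_rate_le:
  assumes P: "P \<in> ARG_states Z"
  shows "other_rate P \<le> other_rates_bound (card Z)"
proof -
  have "ARG_rate \<rho> P P' \<le> 2 ^ card Z" if "card P' \<noteq> Suc (card P)" for P'
  proof -
    have "merge_rate P P' \<le> 2 ^ card P"
      using P finite_Z by (intro merge_rate_le) (simp add: ARG_states_def finite_elements)
    also have "\<dots> \<le> 2 ^ card Z"
      using card_ARG_state_le[OF finite_Z P] by simp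
    finally show ?thesis
      using split_rate_eq_0[OF finite_Z P that] by (simp add: ARG_rate_def)
  qed
  then have "other_rate P \<le> (\<Sum>P'\<in>{P'\<in>ARG_states Z. card P' \<noteq> Suc (card P)}. 2 ^ card Z)"
    unfolding other_rate_def by (intro sum_mono) simp
  also have "\<dots> \<le> (\<Sum>P'\<in>ARG_states Z. 2 ^ card Z)"
    using finite_ARG_states[OF finite_Z] by (intro sum_mono2) auto
  also have "\<dots> = real (card (ARG_states Z)) * 2 ^ card Z"
    by simp
  also have "\<dots> \<le> 2 ^ 2 ^ card Z * 2 ^ card Z"
  proof (rule mult_right_mono)
    show "real (card (ARG_states Z)) \<le> 2 ^ 2 ^ card Z"
      using card_ARG_states_le[OF finite_Z] by (metis of_nat_le_iff of_nat_numeral of_nat_power)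
  qed simp
  finally show ?thesis
    by (simp add: other_rates_bound_def mult.commute)
qed

sublocale substochastic "ARG_states Z" "jump_prob Z \<rho>"
proof
  show "finite (ARG_states Z)"
    using finite_Z by (rule finite_ARG_states)
  show "0 \<le> jump_prob Z \<rho> P P'" for P P'
    using rate_nonneg up_rate_nonneg other_rate_nonneg by (simp add: jump_prob_def total_rate_eq)
  show "(\<Sum>P'\<in>ARG_states Z. jump_prob Z \<rho> P P') \<le> 1" for P
    by (simp add: jump_prob_def total_rate_def flip: sum_divide_distrib)
qed

lemma up_jump_prob_ge:
  assumes P: "P \<in> ARG_states Z" and "P \<noteq> pi0 Z"
  shows "climb_prob \<le> (\<Sum>P'\<in>{P'\<in>ARG_states Z. card P' = Suc (card P)}. jump_prob Z \<rho> P P')"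
proof -
  let ?x = "\<alpha> * \<rho>" and ?M = "other_rates_bound (card Z)"
  have "0 < ?x" "?x \<le> up_rate P"
    using up_rate_ge[OF assms] rho_pos by auto
  moreover have "other_rate P \<le> ?M"
    using P by (rule other_rate_le)
  ultimately have "?x * other_rate P \<le> up_rate P * ?M"
    using other_rate_nonneg by (intro mult_mono) auto
  moreover have "0 < ?x + ?M" "0 < up_rate P + other_rate P"
    using \<open>0 < ?x\<close> \<open>?x \<le> up_rate P\<close> other_rate_nonneg[of P] other_rates_bound_pos[of "card Z"]
    by linarith+
  ultimately have "?x / (?x + ?M) \<le> up_rate P / (up_rate P + other_rate P)"
    by (simp add: divide_simps algebra_simps)
  then show ?thesis
    by (simp add: jump_prob_def up_rate_def total_rate_eq flip: sum_divide_distrib)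
qed

lemma potential_drift:
  assumes P: "P \<in> ARG_states Z" and "P \<noteq> pi0 Z"
  shows "1 / total_rate Z \<rho> P +
           (\<Sum>P'\<in>ARG_states Z - {pi0 Z}. jump_prob Z \<rho> P P' * potential (card P'))
         \<le> potential (card P)"
proof -
  let ?T = "total_rate Z \<rho> P" and ?M = "other_rates_bound (card Z)"
  let ?up = "{P'\<in>ARG_states Z. card P' = Suc (card P)}"
    and ?other = "{P'\<in>ARG_states Z. card P' \<noteq> Suc (card P)}"
  have x: "0 < \<alpha> * \<rho>" "\<alpha> * \<rho> \<le> up_rate P"
    using up_rate_ge[OF assms] rho_pos by auto
  have M: "0 \<le> ?M"
    using other_rates_bound_pos less_imp_le by blast
  have T: "0 < ?T"
    using x other_rate_nonneg[of P] by (simp add: total_rate_eq)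
  have "(\<Sum>P'\<in>ARG_states Z - {pi0 Z}. jump_prob Z \<rho> P P' * potential (card P'))
      \<le> (\<Sum>P'\<in>ARG_states Z. jump_prob Z \<rho> P P' * potential (card P'))"
    using finite_states x M by (intro sum_mono2 mult_nonneg_nonneg J_nonneg geometric_potential_nonneg) auto
  also have "\<dots> = ((\<Sum>P'\<in>?up. ARG_rate \<rho> P P' * potential (card P')) +
                   (\<Sum>P'\<in>?other. ARG_rate \<rho> P P' * potential (card P'))) / ?T"
    using sum.Int_Diff[OF finite_states, of "\<lambda>P'. ARG_rate \<rho> P P' * potential (card P')"
        "{P'. card P' = Suc (card P)}"]
    by (simp add: jump_prob_def Int_def set_diff_eq flip: sum_divide_distrib)
  also have "\<dots> \<le> (up_rate P * potential (Suc (card P)) + other_rate P * potential 0) / ?T"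
    unfolding up_rate_def other_rate_def sum_distrib_right using T x M
    by (intro divide_right_mono add_mono sum_mono mult_left_mono rate_nonneg
        geometric_potential_antimono) auto
  finally have "1 / ?T + (\<Sum>P'\<in>ARG_states Z - {pi0 Z}. jump_prob Z \<rho> P P' * potential (card P'))
      \<le> (1 + up_rate P * potential (Suc (card P)) + other_rate P * potential 0) / ?T"
    by (simp add: add_divide_distrib)
  also have "\<dots> \<le> ?T * potential (card P) / ?T"
    unfolding total_rate_eq using T
    by (intro divide_right_mono geometric_potential_drift M x other_rate_nonneg other_rate_le P
        card_ARG_state_less[OF finite_Z P \<open>P \<noteq> pi0 Z\<close>]) (simp_all add: total_rate_eq)
  finally show ?thesis
    using T by simp
qed

lemma holding_time_nonneg: "0 \<le> 1 / total_rate Z \<rho> P"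
  using up_rate_nonneg other_rate_nonneg by (simp add: total_rate_eq)

lemma return_time_exp_eq:
  "return_time_exp Z \<rho> =
     (\<Sum>m. ennreal (hitting_cost (\<lambda>P. 1 / total_rate Z \<rho> P) (pi0 Z) m (pi0 Z)))"
proof -
  have "0 \<le> path_weight (jump_prob Z \<rho>) (pi0 Z) xs * (\<Sum>P\<leftarrow>butlast xs. 1 / total_rate Z \<rho> P)"
    for xs
    using holding_time_nonneg
    by (intro mult_nonneg_nonneg path_weight_nonneg J_nonneg sum_list_nonneg) auto
  then show ?thesis
    unfolding return_time_exp_def hitting_cost_def first_passage_paths_def path_prob_eq_path_weight
    by (simp add: sum_ennreal)
qed

lemma jump_potential_le:
  "ennreal (\<Sum>P\<in>ARG_states Z - {pi0 Z}. jump_prob Z \<rho> (pi0 Z) P * potential (card P))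
     \<le> ennreal (potential 0)"
proof (cases "ARG_states Z - {pi0 Z} = {}")
  case True
  then show ?thesis
    unfolding True by simp
next
  case False
  then obtain P where "P \<in> ARG_states Z" "P \<noteq> pi0 Z"
    by blast
  then have x: "0 < \<alpha> * \<rho>"
    using up_rate_ge(1) rho_pos by simp
  have M: "0 \<le> other_rates_bound (card Z)"
    using other_rates_bound_pos less_imp_le by blast
  have "(\<Sum>P\<in>ARG_states Z - {pi0 Z}. jump_prob Z \<rho> (pi0 Z) P * potential (card P))
      \<le> (\<Sum>P\<in>ARG_states Z - {pi0 Z}. jump_prob Z \<rho> (pi0 Z) P * potential 0)"
    by (intro sum_mono mult_left_mono J_nonneg geometric_potential_antimono M x) simp
  also have "\<dots> \<le> (\<Sum>P\<in>ARG_states Z. jump_prob Z \<rho> (pi0 Z) P * potential 0)"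
    by (intro sum_mono2 finite_states mult_nonneg_nonneg J_nonneg geometric_potential_nonneg M x) auto
  also have "\<dots> = (\<Sum>P\<in>ARG_states Z. jump_prob Z \<rho> (pi0 Z) P) * potential 0"
    by (simp add: sum_distrib_right)
  also have "\<dots> \<le> potential 0"
    using row_sum_le_1[OF pi0_in_ARG_states]
    by (intro mult_left_le_one_le geometric_potential_nonneg[OF M x] sum_nonneg J_nonneg)
  finally show ?thesis
    by (rule ennreal_leI)
qed

lemma return_time_exp_le: "return_time_exp Z \<rho> \<le> ennreal (potential 0)"
proof -
  have "return_time_exp Z \<rho> \<le>
      ennreal (\<Sum>P\<in>ARG_states Z - {pi0 Z}. jump_prob Z \<rho> (pi0 Z) P * potential (card P))"
    unfolding return_time_exp_eq
  proof (rule suminf_hitting_cost_le[OF pi0_in_ARG_states])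
    show "0 \<le> potential (card P)" if "P \<in> ARG_states Z - {pi0 Z}" for P
      using up_rate_ge(1)[of P] that rho_pos other_rates_bound_pos[of "card Z"]
      by (intro geometric_potential_nonneg) auto
  qed (use holding_time_nonneg potential_drift in auto)
  also note jump_potential_le
  finally show ?thesis .
qed

lemma escape_prob_eq:
  "escape_prob Z \<rho> P =
     (\<Sum>m. ennreal (\<Sum>xs\<in>{xs\<in>first_passage_paths (ARG_states Z) (pi0 Z) m. P \<notin> set xs}.
                      path_weight (jump_prob Z \<rho>) P xs))"
  unfolding escape_prob_def first_passage_paths_def path_prob_eq_path_weight
  by (simp add: sum_ennreal path_weight_nonneg J_nonneg conj_assoc)

lemma ascending_paths_weight_ge_climb_prob:
  assumes P: "P \<in> ARG_states Z" and "P \<noteq> pi0 Z" and "card P + k \<le> card Z"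
  shows "climb_prob ^ k \<le> (\<Sum>xs\<in>ascending_paths (ARG_states Z) card k P. path_weight (jump_prob Z \<rho>) P xs)"
proof (rule ascending_paths_weight_ge[where r = card and N = "card Z", OF _ _ P])
  show "0 \<le> climb_prob"
    using up_rate_ge(1)[OF P \<open>P \<noteq> pi0 Z\<close>] rho_pos other_rates_bound_pos[of "card Z"] by simp
  show "climb_prob \<le> (\<Sum>P''\<in>{P''\<in>ARG_states Z. card P'' = Suc (card P')}. jump_prob Z \<rho> P' P'')"
    if "P' \<in> ARG_states Z" "card P' < card Z" for P'
  proof (rule up_jump_prob_ge[OF that(1)])
    show "P' \<noteq> pi0 Z"
      using that(2) card_pi0[of Z] by auto
  qed
qed (rule assms(3))

lemma ascending_paths_escape:
  assumes "card P + k = card Z" and "0 < k"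
  shows "ascending_paths (ARG_states Z) card k P
           \<subseteq> {xs\<in>first_passage_paths (ARG_states Z) (pi0 Z) (k - 1). P \<notin> set xs}"
  using ascending_path_first_passage[of _ "ARG_states Z" card k P "card Z" "pi0 Z"] assms
    card_pi0[of Z] card_ARG_state_less[OF finite_Z]
  by force

lemma escape_prob_ge:
  assumes P: "P \<in> ARG_states Z" and "P \<noteq> pi0 Z"
  shows "ennreal (climb_prob ^ (card Z - 1)) \<le> escape_prob Z \<rho> P"
proof -
  define k where "k = card Z - card P"
  have "card P < card Z"
    using card_ARG_state_less[OF finite_Z assms] .
  moreover have "P \<noteq> {}"
    using assms by (auto simp: ARG_states_def pi0_def partition_on_def)
  then have "0 < card P"
    using P finite_Z by (simp add: ARG_states_def card_gt_0_iff finite_elements)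
  ultimately have k: "card P + k = card Z" "0 < k" "k \<le> card Z - 1"
    by (auto simp: k_def)
  have "0 < \<alpha> * \<rho>"
    using up_rate_ge(1)[OF assms] rho_pos by simp
  then have "climb_prob ^ (card Z - 1) \<le> climb_prob ^ k"
    using other_rates_bound_pos[of "card Z"] k(3) by (intro power_decreasing) auto
  also have "\<dots> \<le> (\<Sum>xs\<in>ascending_paths (ARG_states Z) card k P. path_weight (jump_prob Z \<rho>) P xs)"
    using ascending_paths_weight_ge_climb_prob[OF assms] k(1) by simp
  also have "\<dots> \<le> (\<Sum>xs\<in>{xs\<in>first_passage_paths (ARG_states Z) (pi0 Z) (k - 1). P \<notin> set xs}.
                     path_weight (jump_prob Z \<rho>) P xs)"
    using ascending_paths_escape[OF k(1,2)]
    by (intro sum_mono2 path_weight_nonneg J_nonneg) (simp_all add: finite_first_passage_paths finite_states)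
  finally have "ennreal (climb_prob ^ (card Z - 1)) \<le> ennreal (\<Sum>xs\<in>{xs\<in>first_passage_paths (ARG_states Z) (pi0 Z) (k - 1). P \<notin> set xs}.
                     path_weight (jump_prob Z \<rho>) P xs)"
    by (rule ennreal_leI)
  also have "\<dots> \<le> escape_prob Z \<rho> P"
    unfolding escape_prob_eq using sum_le_suminf[OF summableI, of "{k - 1}"] by simp
  finally show ?thesis .
qed

end

lemma Min_pairwise_distance_le:
  fixes z :: "nat \<Rightarrow> real"
  assumes "inj_on z {0..n}" and "a \<in> z ` {0..n}" "b \<in> z ` {0..n}" "a < b"
  shows "0 < Min {\<bar>z i - z j\<bar> | i j. i \<le> n \<and> j \<le> n \<and> i \<noteq> j}"
    and "Min {\<bar>z i - z j\<bar> | i j. i \<le> n \<and> j \<le> n \<and> i \<noteq> j} \<le> b - a"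
proof -
  let ?D = "{\<bar>z i - z j\<bar> | i j. i \<le> n \<and> j \<le> n \<and> i \<noteq> j}"
  have fin: "finite ?D"
    by (rule finite_subset[of _ "(\<lambda>(i, j). \<bar>z i - z j\<bar>) ` ({..n} \<times> {..n})"]) auto
  obtain i j where "i \<le> n" "j \<le> n" "a = z i" "b = z j"
    using assms(2,3) by auto
  then have gap: "b - a \<in> ?D"
    using \<open>a < b\<close> by (intro CollectI exI[of _ j] exI[of _ i]) auto
  with fin show "Min ?D \<le> b - a"
    by (rule Min_le)
  have "0 < d" if "d \<in> ?D" for d
    using that assms(1) by (auto simp: inj_on_def)
  then show "0 < Min ?D"
    using Min_in[OF fin] gap by blast
qed

theorem lemma5:
  fixes n :: nat
  shows "\<exists>g h :: real \<Rightarrow> real. (g \<longlongrightarrow> 0) at_top \<and> (h \<longlongrightarrow> 1) at_top \<and>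
    (\<forall>(z :: nat \<Rightarrow> real) (\<rho> :: real). inj_on z {0..n} \<and> \<rho> > 0 \<longrightarrow>
       (let Z = z ` {0..n};
            \<alpha> = Min {\<bar>z i - z j\<bar> | i j. i \<le> n \<and> j \<le> n \<and> i \<noteq> j}
        in return_time_exp Z \<rho> \<le> ennreal (g (\<alpha> * \<rho>)) \<and>
           (\<forall>k>0. \<forall>P. P \<in> ARG_states Z \<and> card P + k = n + 1 \<longrightarrow>
              ennreal (h (\<alpha> * \<rho>)) \<le> escape_prob Z \<rho> P)))"
proof -
  let ?M = "other_rates_bound (Suc n)"
  let ?g = "\<lambda>x. geometric_potential ?M x (Suc n) 0" and ?h = "\<lambda>x. (x / (x + ?M)) ^ n"
  have "let Z = z ` {0..n}; \<alpha> = Min {\<bar>z i - z j\<bar> | i j. i \<le> n \<and> j \<le> n \<and> i \<noteq> j}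
        in return_time_exp Z \<rho> \<le> ennreal (?g (\<alpha> * \<rho>)) \<and>
           (\<forall>k>0. \<forall>P. P \<in> ARG_states Z \<and> card P + k = n + 1 \<longrightarrow>
              ennreal (?h (\<alpha> * \<rho>)) \<le> escape_prob Z \<rho> P)"
    if "inj_on z {0..n}" "0 < \<rho>" for z :: "nat \<Rightarrow> real" and \<rho> :: real
  proof -
    define Z where "Z = z ` {0..n}"
    define \<alpha> where "\<alpha> = Min {\<bar>z i - z j\<bar> | i j. i \<le> n \<and> j \<le> n \<and> i \<noteq> j}"
    interpret ARG_min_gap Z \<alpha> \<rho>
      using that Min_pairwise_distance_le[OF that(1)] by unfold_locales (auto simp: Z_def \<alpha>_def)
    have card_Z: "card Z = Suc n"
      using card_image[OF that(1)] by (simp add: Z_def)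
    have "P \<noteq> pi0 Z" if "card P + k = n + 1" "0 < k" for P k
      using that card_pi0[of Z] card_Z by auto
    then show ?thesis
      using return_time_exp_le escape_prob_ge card_Z by (auto simp: Let_def Z_def \<alpha>_def)
  qed
  then show ?thesis
    using geometric_potential_tendsto_0 tendsto_ratio_power_1 by blast
qed

end
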